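(* Let $f=\frac1n\sum_{i=1}^n f_i$ with each $f_i:\mathbb{R}^d\to\mathbb{R}$ twice continuously differentiable, and suppose there are constants $0<\mu<L$ such that for all $i$ and all $x,\hat x\in\mathbb{R}^d$, $$\mu\|x-\hat x\|^2\le (\nabla f_i(x)-\nabla f_i(\hat x))^\top(x-\hat x)\le L\|x-\hat x\|^2 .$$ Let $x^*$ be the minimizer of $f$ and $\kappa=L/\mu$. Consider the asynchronous L-DQN iteration described in the context, with a constant stepsize $\eta_t=\eta$, and suppose there are constants $0<\epsilon_d<\epsilon_u$ such that for all $i=1,\dots,n$, all $t>0$ and all $x\in\mathbb{R}^d$, $$\epsilon_d I_d\preceq (\tilde B_i^t)^{-1/2}\nabla^2 f_i(x)(\tilde B_i^t)^{-1/2}\preceq \epsilon_u I_d .$$ Suppose the ratio $\epsilon:=\epsilon_u/\epsilon_d$ satisfies $$\epsilon<\frac12\left[1+\frac1\kappa+\sqrt{\Big(1+\frac1\kappa\Big)^2+\frac4\kappa}\right],$$ and that the stepsize satisfies $\eta\in\Big(\frac{1}{\epsilon_d}\big[1-\frac{1}{\epsilon\kappa}\big],\ \frac{2}{\epsilon_d+\epsilon_u}\Big)$. Then the iterates converge linearly over epochs: there exists $\rho<1$ such that for every $m\in\mathbb{N}^+$ and every $t\in[E_m,E_{m+1})$, $$\|x^{t+1}-x^*\|\le \rho^{m}\|x^0-x^*\|.$$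
   Context: Setting (master/worker, asynchronous): a master holds the iterate $x^t\in\mathbb{R}^d$ at time $t=0,1,2,\dots$; at each time $t$ one worker $i_t\in\{1,\dots,n\}$ communicates with the master. For worker $i$ and time $t$, $d_i^t\ge 0$ denotes the delay, i.e. the last exchange between the master and worker $i$ took place at time $t-d_i^t$, and $D_i^t:=d_i^t+d_i^{t-d_i^t-1}+1$ denotes the double delay, i.e. the exchange before that took place at time $t-D_i^t$. Each worker $i$ holds a local copy $z_i^t$ of the iterate it last received from the master (so $z_i^t=z_i^{t-d_i^t}$ is an earlier master iterate) and a symmetric positive definite matrix $\tilde B_i^t=\tilde B_i^{t-d_i^t}$ (its Hessian approximation of $f_i$, which in L-DQN is produced by limited-memory BFGS updates with memory $m$ and scaling $\gamma_i=\|y_i\|^2/(y_i^\top s_i)$, $s_i=x-z_i$, $y_i=\nabla f_i(x)-\nabla f_i(z_i)$; only the spectral hypothesis in the claim is used about these matrices). Initially $z_i^0=x^0$. The master update is $$x^{t+1}=\big(\tilde B^t\big)^{-1}\Big[\sum_{i=1}^n \tilde B_i^t z_i^t-\eta_t\sum_{i=1}^n\nabla f_i(z_i^t)\Big],\qquad \tilde B^t:=\sum_{i=1}^n\tilde B_i^t .$$ Epochs: $E_1=0$ and $E_{m+1}=\min\{t:\ t-D_i^t\ge E_m \text{ for all } i=1,\dots,n\}$, i.e. $E_{m+1}$ is the first time $t$ such that every worker has made at least two updates in $[E_m,t]$. $I_d$ is the $d\times d$ identity, $\preceq$ the Loewner order, $\|\cdot\|$ the Euclidean norm. *)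

theory Defs
  imports "HOL-Analysis.Analysis"
begin

definition sym_mat :: "real^'n^'n \<Rightarrow> bool" where
  "sym_mat A \<longleftrightarrow> transpose A = A"

definition pos_def_mat :: "real^'n^'n \<Rightarrow> bool" where
  "pos_def_mat A \<longleftrightarrow> sym_mat A \<and> (\<forall>v. v \<noteq> 0 \<longrightarrow> 0 < v \<bullet> (A *v v))"

definition loewner_le :: "real^'n^'n \<Rightarrow> real^'n^'n \<Rightarrow> bool" where
  "loewner_le A B \<longleftrightarrow> (\<forall>v. v \<bullet> (A *v v) \<le> v \<bullet> (B *v v))"

definition psd_sqrt :: "real^'n^'n \<Rightarrow> real^'n^'n" where
  "psd_sqrt A = (THE S. sym_mat S \<and> (\<forall>v. 0 \<le> v \<bullet> (S *v v)) \<and> S ** S = A)"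

definition inv_sqrt :: "real^'n^'n \<Rightarrow> real^'n^'n" where
  "inv_sqrt B = psd_sqrt (matrix_inv B)"

text \<open>sched t is the worker i_t communicating with the master at time t.\<close>

definition delay :: "(nat \<Rightarrow> nat) \<Rightarrow> nat \<Rightarrow> nat \<Rightarrow> nat" where
  "delay sched i t = t - Max {s. s \<le> t \<and> sched s = i}"

definition double_delay :: "(nat \<Rightarrow> nat) \<Rightarrow> nat \<Rightarrow> nat \<Rightarrow> nat" where
  "double_delay sched i t =
     delay sched i t + delay sched i (t - delay sched i t - 1) + 1"

text \<open>Local copy z_i^t held (at the master) for worker i: the master iterate the worker
  received at its exchange before the last one (at time t - D_i^t, receiving x^(t - D_i^t + 1));
  initially x^0.\<close>
definition local_copy :: "(nat \<Rightarrow> real^'d) \<Rightarrow> (nat \<Rightarrow> nat) \<Rightarrow> nat \<Rightarrow> nat \<Rightarrow> real^'d" where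
  "local_copy x sched i t =
     (if 2 \<le> card {s. s \<le> t \<and> sched s = i}
      then x (t - double_delay sched i t + 1) else x 0)"

text \<open>Epochs: epoch 1 = E_1 = 0, epoch (m+1) = E_(m+1) = first t such that every worker
  made at least two updates in [E_m, t]. (epoch 0 is a dummy value.)\<close>
fun epoch :: "(nat \<Rightarrow> nat) \<Rightarrow> nat \<Rightarrow> nat \<Rightarrow> nat" where
  "epoch sched n 0 = 0"
| "epoch sched n (Suc 0) = 0"
| "epoch sched n (Suc (Suc m)) =
     (LEAST t. \<forall>i\<in>{1..n}. 2 \<le> card {s. epoch sched n (Suc m) \<le> s \<and> s \<le> t \<and> sched s = i})"

end

theory Submission
  imports Defs
begin

(*
  Read through B^(-1/2), the spectral hypothesis says
  ed B <= Hess f_i <= eu B for every local matrix B. Hence the Jacobian B - eta Hess f_i of the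
  worker map z |-> B z - eta grad f_i z has a quadratic form bounded by (1 - eta ed) L / ed, while
  Hess f_i >= mu gives B >= (mu / eu) I. As the gradients sum to zero at xs, one master step maps
  local copies within distance R of xs to an iterate within rho R, where
  rho = (1 - eta ed) L eu / (ed mu), and the lower bound on the stepsize says exactly rho < 1.
  Every local copy used in epoch m + 1 is an iterate produced in epoch m, so induction over time
  gives the factor rho^m.
*)

section \<open>Matrix algebra\<close>

lemma matrix_eqI: "(\<And>v. A *v v = B *v v) \<Longrightarrow> (A::real^'n^'m) = B"
  by (simp add: matrix_eq)

lemma transpose_add: "transpose (A + B) = transpose A + transpose (B::real^'n^'m)"
  by (simp add: transpose_def vec_eq_iff)

lemma transpose_diff: "transpose (A - B) = transpose A - transpose (B::real^'n^'m)"
  by (simp add: transpose_def vec_eq_iff)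

lemma matrix_add_rdistrib: "(A + B) ** C = A ** C + B ** (C::real^'n^'n)"
  by (rule matrix_eqI) (simp add: matrix_vector_mul_assoc[symmetric] matrix_vector_mult_add_rdistrib)

lemma matrix_diff_rdistrib: "(A - B) ** C = A ** C - B ** (C::real^'n^'n)"
  by (rule matrix_eqI) (simp add: matrix_vector_mul_assoc[symmetric] matrix_vector_mult_diff_rdistrib)

lemma matrix_diff_ldistrib: "C ** (A - B) = C ** A - C ** (B::real^'n^'n)"
  by (rule matrix_eqI) (simp add: matrix_vector_mul_assoc[symmetric] matrix_vector_mult_diff_rdistrib matrix_vector_mult_diff_distrib)

lemma matrix_scaleR_left: "(a *\<^sub>R A) ** C = a *\<^sub>R (A ** (C::real^'n^'n))"
  by (simp add: scalar_matrix_assoc)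

lemma matrix_scaleR_right: "A ** (a *\<^sub>R C) = a *\<^sub>R (A ** (C::real^'n^'n))"
  by (rule matrix_eqI) (simp add: matrix_vector_mul_assoc[symmetric] scaleR_matrix_vector_assoc[symmetric] matrix_vector_mult_scaleR)

lemma sum_matrix_vector_mult: "(\<Sum>i\<in>I. A i) *v v = (\<Sum>i\<in>I. A i *v v)" for A :: "'a \<Rightarrow> real^'n^'m"
  by (induction I rule: infinite_finite_induct) (simp_all add: matrix_vector_mult_add_rdistrib)

lemma matrix_entry_inner: "(A :: real^'n^'n) $ i $ j = axis i 1 \<bullet> (A *v axis j 1)"
  by (simp add: inner_vec_def matrix_vector_mult_def axis_def if_distrib if_distribR sum.delta cong del: if_weak_cong)

lemma quadratic_form_expand: "v \<bullet> (A *v v) = (\<Sum>i\<in>UNIV. v $ i * (\<Sum>j\<in>UNIV. A $ i $ j * v $ j))"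
  by (simp add: inner_vec_def matrix_vector_mult_def)

lemma sym_mat_inner_swap: "sym_mat A \<Longrightarrow> x \<bullet> (A *v y) = (A *v x) \<bullet> y"
proof -
  assume "sym_mat A"
  hence tA: "transpose A = A" by (simp add: sym_mat_def)
  have "x \<bullet> (A *v y) = (x v* A) \<bullet> y" by (simp add: dot_lmul_matrix)
  also have "x v* A = A *v x" using vector_transpose_matrix[of x A] tA by simp
  finally show ?thesis .
qed

lemma sym_mat_polarization: assumes "sym_mat A"
  shows "u \<bullet> (A *v w) = ((u + w) \<bullet> (A *v (u + w)) - (u - w) \<bullet> (A *v (u - w))) / 4"
proof -
  have symm: "w \<bullet> (A *v u) = u \<bullet> (A *v w)"
    using sym_mat_inner_swap[OF assms, of w u] by (simp add: inner_commute)
  show ?thesis using symm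
    by (simp add: matrix_vector_right_distrib matrix_vector_mult_diff_distrib
        inner_add_left inner_add_right inner_diff_left inner_diff_right)
qed

lemma norm_sym_mat_vector_le:
  fixes A :: "real^'n^'n"
  assumes S: "sym_mat A" and b: "\<And>v. \<bar>v \<bullet> (A *v v)\<bar> \<le> M * (norm v)\<^sup>2"
  shows "norm (A *v v) \<le> M * norm v"
proof (cases "A *v v = 0")
  case True
  have "0 \<le> M * (norm v)\<^sup>2" using b[of v] by linarith
  then have "0 \<le> M * norm v"
    by (cases "v = 0") (auto simp: zero_le_mult_iff)
  then show ?thesis using True by simp
next
  case False
  define w where "w = A *v v"
  have wn: "norm w > 0" using False w_def by simp
  have vnz: "v \<noteq> 0" using False by auto
  define u where "u = (norm v / norm w) *\<^sub>R w"
  have nu: "norm u = norm v" using wn by (simp add: u_def)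
  have uAv: "u \<bullet> (A *v v) = norm v * norm w"
    using wn by (simp add: u_def w_def inner_scaleR_left power2_norm_eq_inner[symmetric] power2_eq_square)
  have symm: "v \<bullet> (A *v u) = u \<bullet> (A *v v)"
    using sym_mat_inner_swap[OF S, of v u] by (simp add: inner_commute)
  have p1: "(u + v) \<bullet> (A *v (u + v)) = u \<bullet> (A *v u) + 2 * (u \<bullet> (A *v v)) + v \<bullet> (A *v v)"
    using symm by (simp add: matrix_vector_right_distrib inner_add_left inner_add_right)
  have p2: "(u - v) \<bullet> (A *v (u - v)) = u \<bullet> (A *v u) - 2 * (u \<bullet> (A *v v)) + v \<bullet> (A *v v)"
    using symm by (simp add: matrix_vector_mult_diff_distrib inner_diff_left inner_diff_right)
  have "4 * (u \<bullet> (A *v v)) = (u + v) \<bullet> (A *v (u + v)) - (u - v) \<bullet> (A *v (u - v))"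
    using p1 p2 by simp
  also have "\<dots> \<le> M * (norm (u+v))\<^sup>2 + M * (norm (u - v))\<^sup>2"
    using b[of "u+v"] b[of "u-v"] by linarith
  also have "\<dots> = M * (2 * (norm u)\<^sup>2 + 2 * (norm v)\<^sup>2)"
    by (simp add: power2_norm_eq_inner inner_add_left inner_add_right inner_diff_left
        inner_diff_right inner_commute algebra_simps)
  finally have "norm v * norm w \<le> M * (norm v)\<^sup>2" using nu uAv by simp
  hence "norm v * norm w \<le> norm v * (M * norm v)" by (simp add: power2_eq_square algebra_simps)
  hence "norm w \<le> M * norm v" using vnz by simp
  then show ?thesis by (simp add: w_def)
qed

lemma matrix_inv_of_injective:
  fixes A :: "real^'n^'n"
  assumes "\<forall>v. A *v v = 0 \<longrightarrow> v = 0"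
  shows "A ** matrix_inv A = mat 1 \<and> matrix_inv A ** A = mat 1"
proof -
  have "invertible A" using assms matrix_left_invertible_ker invertible_left_inverse by blast
  then show ?thesis unfolding invertible_def matrix_inv_def by (rule someI_ex)
qed

lemma coercive_matrix_vector_eq_0:
  fixes A :: "real^'n^'n"
  assumes c: "0 < c" and coercive: "\<And>p. c * (norm p)\<^sup>2 \<le> p \<bullet> (A *v p)" and "A *v v = 0"
  shows "v = 0"
proof -
  have "c * (norm v)\<^sup>2 \<le> 0" using coercive[of v] assms(3) by simp
  then have "(norm v)\<^sup>2 \<le> 0" using c by (simp add: mult_le_0_iff)
  then show ?thesis by simp
qed

lemma norm_matrix_inv_le:
  fixes A :: "real^'n^'n"
  assumes c: "0 < c" and coercive: "\<And>p. c * (norm p)\<^sup>2 \<le> p \<bullet> (A *v p)"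
  shows "norm (matrix_inv A *v u) \<le> norm u / c"
proof -
  have "\<forall>v. A *v v = 0 \<longrightarrow> v = 0"
    using coercive_matrix_vector_eq_0[OF c coercive] by blast
  then have inv: "A ** matrix_inv A = mat 1" using matrix_inv_of_injective by blast
  define p where "p = matrix_inv A *v u"
  have Ap: "A *v p = u" using inv by (simp add: p_def matrix_vector_mul_assoc)
  have "norm p * (c * norm p) \<le> norm p * norm u"
    using coercive[of p] norm_cauchy_schwarz[of p u] Ap by (simp add: power2_eq_square ac_simps)
  then have "c * norm p \<le> norm u" if "p \<noteq> 0" using that by simp
  then show ?thesis using c by (cases "p = 0") (auto simp: p_def field_simps)
qed

section \<open>Positive semidefinite square roots\<close>

definition psd_mat :: "real^'n^'n \<Rightarrow> bool" where
  "psd_mat M \<longleftrightarrow> (\<forall>v. 0 \<le> v \<bullet> (M *v v))"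

lemma psd_mat_form_zero_imp:
  fixes M :: "real^'n^'n"
  assumes S: "sym_mat M" and P: "psd_mat M" and z: "v \<bullet> (M *v v) = 0"
  shows "M *v v = 0"
proof (rule ccontr)
  assume nz: "M *v v \<noteq> 0"
  define w where "w = M *v v"
  define c where "c = w \<bullet> (M *v w) + 1"
  have c0: "c > 0" using P by (simp add: psd_mat_def c_def add_nonneg_pos)
  have wp: "w \<bullet> w > 0" using nz w_def by simp
  define t where "t = - (w \<bullet> w) / c"
  have symm: "v \<bullet> (M *v w) = w \<bullet> w"
    using sym_mat_inner_swap[OF S, of v w] by (simp add: w_def)
  have "0 \<le> (v + t *\<^sub>R w) \<bullet> (M *v (v + t *\<^sub>R w))" using P by (simp add: psd_mat_def)
  also have "\<dots> = 2 * t * (w \<bullet> w) + t^2 * (w \<bullet> (M *v w))"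
    using symm z by (simp add: matrix_vector_right_distrib matrix_vector_mult_scaleR inner_add_left
        inner_add_right w_def algebra_simps power2_eq_square)
  also have "\<dots> \<le> 2 * t * (w \<bullet> w) + t^2 * c"
    by (simp add: c_def mult_left_mono)
  also have "\<dots> = - ((w \<bullet> w) * (w \<bullet> w)) / c"
    using c0 by (simp add: t_def field_simps power2_eq_square)
  also have "\<dots> < 0" using wp c0 by simp
  finally show False by simp
qed

lemma psd_mat_diag_nonneg: "psd_mat M \<Longrightarrow> 0 \<le> (M::real^'n^'n) $ i $ i"
  using matrix_entry_inner[of M i i] by (simp add: psd_mat_def)

lemma psd_mat_trace_nonneg: "psd_mat M \<Longrightarrow> 0 \<le> trace (M::real^'n^'n)"
  unfolding trace_def by (intro sum_nonneg psd_mat_diag_nonneg)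

lemma psd_mat_trace_zero:
  fixes M :: "real^'n^'n"
  assumes S: "sym_mat M" and P: "psd_mat M" and t: "trace M = 0"
  shows "M = 0"
proof -
  have nn: "\<forall>i\<in>UNIV. 0 \<le> M $ i $ i" using P matrix_entry_inner[of M] by (simp add: psd_mat_def)
  hence "\<forall>i\<in>UNIV. M $ i $ i = 0" using t unfolding trace_def
    using sum_nonneg_eq_0_iff[of UNIV "\<lambda>i. M $ i $ i"] by simp
  hence "M *v axis i 1 = 0" for i using psd_mat_form_zero_imp[OF S P, of "axis i 1"] matrix_entry_inner[of M i i] by simp
  hence "M $ j $ i = 0" for i j using matrix_entry_inner[of M j i] by simp
  then show ?thesis by (simp add: vec_eq_iff)
qed

lemma sym_psd_sandwich:
  fixes D S :: "real^'n^'n"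
  assumes D: "sym_mat D" and S: "sym_mat S" and P: "psd_mat S"
  shows "sym_mat (D ** S ** D) \<and> psd_mat (D ** S ** D)"
proof
  show "sym_mat (D ** S ** D)" using D S
    by (simp add: sym_mat_def matrix_transpose_mul matrix_mul_assoc)
  show "psd_mat (D ** S ** D)" unfolding psd_mat_def
  proof
    fix v
    have "v \<bullet> ((D ** S ** D) *v v) = (D *v v) \<bullet> (S *v (D *v v))"
      using sym_mat_inner_swap[OF D, of v "S *v (D *v v)"] by (simp add: matrix_vector_mul_assoc[symmetric])
    then show "0 \<le> v \<bullet> ((D ** S ** D) *v v)" using P by (simp add: psd_mat_def)
  qed
qed

primrec matpow :: "real^'n^'n \<Rightarrow> nat \<Rightarrow> real^'n^'n" where
  "matpow A 0 = mat 1"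
| "matpow A (Suc k) = A ** matpow A k"

lemma matpow_add: "matpow A (j + k) = matpow A j ** matpow A k"
  by (induction j) (simp_all add: matrix_mul_assoc)

lemma matpow_commute: "matpow A j ** matpow A k = matpow A k ** matpow A j"
  by (metis matpow_add add.commute)

lemma sym_mat_matpow: "sym_mat A \<Longrightarrow> sym_mat (matpow A k)"
proof (induction k)
  case 0 then show ?case by (simp add: sym_mat_def)
next
  case (Suc k)
  have "transpose (A ** matpow A k) = matpow A k ** A"
    using Suc by (simp add: matrix_transpose_mul sym_mat_def)
  also have "\<dots> = A ** matpow A k" using matpow_commute[of A k "Suc 0"] by simp
  finally show ?case by (simp add: sym_mat_def)
qed

lemma psd_mat_matpow: assumes S: "sym_mat A" and P: "psd_mat A" shows "psd_mat (matpow A k)"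
proof -
  have ev: "matpow A (j + j) = matpow A j ** matpow A j" for j by (rule matpow_add)
  have od: "matpow A (j + Suc j) = matpow A j ** (A ** matpow A j)" for j using matpow_add[of A j "Suc j"] by simp
  show ?thesis unfolding psd_mat_def
  proof
    fix v
    have "\<exists>j. k = j + j \<or> k = j + Suc j" by presburger
    then obtain j where "k = j + j \<or> k = j + Suc j" by blast
    then show "0 \<le> v \<bullet> (matpow A k *v v)"
    proof
      assume "k = j + j"
      hence "v \<bullet> (matpow A k *v v) = (matpow A j *v v) \<bullet> (matpow A j *v v)"
        using ev sym_mat_inner_swap[OF sym_mat_matpow[OF S], of v j "matpow A j *v v"]
        by (simp add: matrix_vector_mul_assoc[symmetric])
      then show ?thesis by simp
    next
      assume "k = j + Suc j"
      hence "v \<bullet> (matpow A k *v v) = (matpow A j *v v) \<bullet> (A *v (matpow A j *v v))"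
        using od sym_mat_inner_swap[OF sym_mat_matpow[OF S], of v j "A *v (matpow A j *v v)"]
        by (simp add: matrix_vector_mul_assoc[symmetric])
      then show ?thesis using P by (simp add: psd_mat_def)
    qed
  qed
qed

inductive_set poly_cone :: "real^'n^'n \<Rightarrow> (real^'n^'n) set" for A where
  pow: "matpow A k \<in> poly_cone A"
| add: "X \<in> poly_cone A \<Longrightarrow> Y \<in> poly_cone A \<Longrightarrow> X + Y \<in> poly_cone A"
| scale: "X \<in> poly_cone A \<Longrightarrow> 0 \<le> a \<Longrightarrow> a *\<^sub>R X \<in> poly_cone A"

lemma poly_cone_mult_matpow: "Y \<in> poly_cone A \<Longrightarrow> matpow A j ** Y \<in> poly_cone A \<and> Y ** matpow A j = matpow A j ** Y"
proof (induction rule: poly_cone.induct)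
  case (pow k)
  then show ?case by (metis poly_cone.pow matpow_add matpow_commute)
next
  case (add X Y)
  then show ?case by (simp add: matrix_add_ldistrib matrix_add_rdistrib poly_cone.add)
next
  case (scale X a)
  then show ?case by (simp add: matrix_scaleR_left matrix_scaleR_right poly_cone.scale)
qed

lemma poly_cone_mult: "X \<in> poly_cone A \<Longrightarrow> Y \<in> poly_cone A \<Longrightarrow> X ** Y \<in> poly_cone A \<and> X ** Y = Y ** X"
proof (induction X rule: poly_cone.induct)
  case (pow k)
  then show ?case using poly_cone_mult_matpow by metis
next
  case (add X Z)
  have e1: "(X + Z) ** Y = X ** Y + Z ** Y" by (rule matrix_add_rdistrib)
  have e2: "Y ** (X + Z) = Y ** X + Y ** Z" by (rule matrix_add_ldistrib)
  show ?case unfolding e1 e2 using add by (auto intro: poly_cone.add)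
next
  case (scale X a)
  have "a *\<^sub>R (X ** Y) \<in> poly_cone A" using scale by (auto intro: poly_cone.scale)
  then show ?case using scale by (simp add: matrix_scaleR_left matrix_scaleR_right)
qed

lemma poly_cone_sym_psd: assumes S: "sym_mat A" and P: "psd_mat A"
  shows "X \<in> poly_cone A \<Longrightarrow> sym_mat X \<and> psd_mat X"
proof (induction rule: poly_cone.induct)
  case (pow k)
  then show ?case using sym_mat_matpow[OF S] psd_mat_matpow[OF S P] by blast
next
  case (add X Y)
  then show ?case by (simp add: sym_mat_def psd_mat_def transpose_add matrix_vector_mult_add_rdistrib inner_add_right add_nonneg_nonneg)
next
  case (scale X a)
  then show ?case by (simp add: sym_mat_def psd_mat_def transpose_scalar scaleR_matrix_vector_assoc[symmetric])
qed

text \<open>For \<open>0 \<le> B \<le> I\<close> the iteration \<open>Y \<mapsto> (B + Y ** Y) / 2\<close> started at \<open>0\<close> increases to the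
  solution of \<open>(I - Y) ** (I - Y) = I - B\<close>. Iterates and increments are polynomials in \<open>B\<close> with
  nonnegative coefficients, hence they commute and are positive semidefinite.\<close>


primrec sqrt_iter :: "real^'n^'n \<Rightarrow> nat \<Rightarrow> real^'n^'n" where
  "sqrt_iter B 0 = 0"
| "sqrt_iter B (Suc k) = (1/2) *\<^sub>R (B + sqrt_iter B k ** sqrt_iter B k)"

lemma mem_poly_cone_self: "B \<in> poly_cone B" using poly_cone.pow[of B "Suc 0"] by simp

lemma sqrt_iter_poly_cone: "sqrt_iter B k \<in> poly_cone B"
proof (induction k)
  case 0
  have "(0::real) *\<^sub>R matpow B 0 \<in> poly_cone B" by (intro poly_cone.scale poly_cone.pow) simp
  then show ?case by simp
next
  case (Suc k)
  have "sqrt_iter B k ** sqrt_iter B k \<in> poly_cone B" using poly_cone_mult[OF Suc Suc] by blast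
  then show ?case by (simp add: mem_poly_cone_self poly_cone.add poly_cone.scale)
qed

lemma sqrt_iter_diff_poly_cone: "sqrt_iter B (Suc k) - sqrt_iter B k \<in> poly_cone B"
proof (induction k)
  case 0
  show ?case using poly_cone.scale[OF mem_poly_cone_self, of "1/2"] by simp
next
  case (Suc k)
  define P where "P = sqrt_iter B (Suc k)"
  define Q where "Q = sqrt_iter B k"
  have PQ: "P ** Q = Q ** P" using poly_cone_mult[OF sqrt_iter_poly_cone sqrt_iter_poly_cone] P_def Q_def by blast
  have "(P - Q) ** (P + Q) = P ** P - Q ** Q"
    by (simp add: matrix_add_ldistrib matrix_diff_rdistrib PQ)
  moreover have "(P - Q) ** (P + Q) \<in> poly_cone B"
    using poly_cone_mult[OF Suc[folded P_def Q_def] poly_cone.add[OF sqrt_iter_poly_cone sqrt_iter_poly_cone]] P_def Q_def by blast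
  ultimately have "P ** P - Q ** Q \<in> poly_cone B" by simp
  hence "(1/2) *\<^sub>R (P ** P - Q ** Q) \<in> poly_cone B" by (rule poly_cone.scale) simp
  moreover have "sqrt_iter B (Suc (Suc k)) - sqrt_iter B (Suc k) = (1/2) *\<^sub>R (P ** P - Q ** Q)"
    by (simp add: P_def Q_def algebra_simps)
  ultimately show ?case by simp
qed

context
  fixes B :: "real^'n^'n"
  assumes S: "sym_mat B" and P: "psd_mat B" and U: "\<And>v. v \<bullet> (B *v v) \<le> (norm v)\<^sup>2"
begin

lemma norm_matrix_vector_le: "norm (B *v w) \<le> norm w"
proof -
  have "\<bar>v \<bullet> (B *v v)\<bar> \<le> 1 * (norm v)\<^sup>2" for v using U[of v] P by (simp add: psd_mat_def)
  from norm_sym_mat_vector_le[OF S this] show ?thesis by simp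
qed

lemma norm_sqrt_iter_le: "norm (sqrt_iter B k *v w) \<le> norm w"
proof (induction k arbitrary: w)
  case 0 then show ?case by simp
next
  case (Suc k)
  have "norm (sqrt_iter B (Suc k) *v w) = (1/2) * norm (B *v w + sqrt_iter B k *v (sqrt_iter B k *v w))"
    by (simp add: scaleR_matrix_vector_assoc[symmetric] matrix_vector_mult_add_rdistrib matrix_vector_mul_assoc)
  also have "\<dots> \<le> (1/2) * (norm (B *v w) + norm (sqrt_iter B k *v (sqrt_iter B k *v w)))"
    by (simp add: norm_triangle_ineq)
  also have "\<dots> \<le> (1/2) * (norm w + norm w)"
    using norm_matrix_vector_le[of w] Suc[of "sqrt_iter B k *v w"] Suc[of w] by simp
  finally show ?case by simp
qed

lemma sqrt_iter_sym_psd: "sym_mat (sqrt_iter B k) \<and> psd_mat (sqrt_iter B k)"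
  using poly_cone_sym_psd[OF S P sqrt_iter_poly_cone] .

lemma sqrt_iter_form_le: "v \<bullet> (sqrt_iter B k *v v) \<le> (norm v)\<^sup>2"
proof -
  have "v \<bullet> (sqrt_iter B k *v v) \<le> norm v * norm (sqrt_iter B k *v v)" by (rule norm_cauchy_schwarz)
  also have "\<dots> \<le> norm v * norm v" by (rule mult_left_mono[OF norm_sqrt_iter_le norm_ge_zero])
  finally show ?thesis by (simp add: power2_eq_square)
qed

lemma sqrt_iter_form_incseq: "incseq (\<lambda>k. v \<bullet> (sqrt_iter B k *v v))"
proof (rule incseq_SucI)
  fix k
  have "psd_mat (sqrt_iter B (Suc k) - sqrt_iter B k)" using poly_cone_sym_psd[OF S P sqrt_iter_diff_poly_cone] by blast
  hence "0 \<le> v \<bullet> ((sqrt_iter B (Suc k) - sqrt_iter B k) *v v)" by (simp add: psd_mat_def)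
  then show "v \<bullet> (sqrt_iter B k *v v) \<le> v \<bullet> (sqrt_iter B (Suc k) *v v)"
    by (simp add: matrix_vector_mult_diff_rdistrib inner_diff_right)
qed

lemma sqrt_iter_form_convergent: "convergent (\<lambda>k. v \<bullet> (sqrt_iter B k *v v))"
proof -
  have "\<forall>k. v \<bullet> (sqrt_iter B k *v v) \<le> (norm v)\<^sup>2" using sqrt_iter_form_le by blast
  then obtain L where "(\<lambda>k. v \<bullet> (sqrt_iter B k *v v)) \<longlonglongrightarrow> L"
    using incseq_convergent[OF sqrt_iter_form_incseq] by blast
  thus ?thesis by (auto simp: convergent_def)
qed

lemma sqrt_iter_entry_convergent: "convergent (\<lambda>k. sqrt_iter B k $ i $ j)"
proof -
  have e: "sqrt_iter B k $ i $ j = ((axis i 1 + axis j 1) \<bullet> (sqrt_iter B k *v (axis i 1 + axis j 1))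
     - (axis i 1 - axis j 1) \<bullet> (sqrt_iter B k *v (axis i 1 - axis j 1))) / 4" for k
    using sym_mat_polarization[OF conjunct1[OF sqrt_iter_sym_psd[of k]]] matrix_entry_inner by metis
  obtain L1 where L1: "(\<lambda>k. (axis i 1 + axis j 1) \<bullet> (sqrt_iter B k *v (axis i 1 + axis j 1))) \<longlonglongrightarrow> L1"
    using sqrt_iter_form_convergent convergent_def by blast
  obtain L2 where L2: "(\<lambda>k. (axis i 1 - axis j 1) \<bullet> (sqrt_iter B k *v (axis i 1 - axis j 1))) \<longlonglongrightarrow> L2"
    using sqrt_iter_form_convergent convergent_def by blast
  have "(\<lambda>k. sqrt_iter B k $ i $ j) \<longlonglongrightarrow> (L1 - L2) / 4"
    unfolding e by (intro tendsto_intros L1 L2) simp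
  thus ?thesis by (auto simp: convergent_def)
qed

definition sqrt_iter_lim :: "real^'n^'n" where "sqrt_iter_lim = (\<chi> i j. lim (\<lambda>k. sqrt_iter B k $ i $ j))"

lemma sqrt_iter_lim_entry: "(\<lambda>k. sqrt_iter B k $ i $ j) \<longlonglongrightarrow> sqrt_iter_lim $ i $ j"
  using sqrt_iter_entry_convergent[of i j] by (simp add: sqrt_iter_lim_def convergent_LIMSEQ_iff)

lemma sqrt_iter_lim_form: "(\<lambda>k. v \<bullet> (sqrt_iter B k *v v)) \<longlonglongrightarrow> v \<bullet> (sqrt_iter_lim *v v)"
  unfolding quadratic_form_expand by (intro tendsto_intros sqrt_iter_lim_entry)

lemma sqrt_iter_lim_form_le: "v \<bullet> (sqrt_iter_lim *v v) \<le> (norm v)\<^sup>2"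
  using sqrt_iter_lim_form[of v] sqrt_iter_form_le by (intro LIMSEQ_le_const2) auto

lemma sym_sqrt_iter_lim: "sym_mat sqrt_iter_lim"
proof -
  have "sqrt_iter B k $ i $ j = sqrt_iter B k $ j $ i" for k i j
    using sqrt_iter_sym_psd[of k] unfolding sym_mat_def by (metis transpose_def vec_lambda_beta)
  hence "sqrt_iter_lim $ i $ j = sqrt_iter_lim $ j $ i" for i j
    using LIMSEQ_unique[OF sqrt_iter_lim_entry[of i j]] sqrt_iter_lim_entry[of j i] by simp
  then show ?thesis by (simp add: sym_mat_def transpose_def vec_eq_iff)
qed

lemma sqrt_iter_lim_fixpoint: "2 *\<^sub>R sqrt_iter_lim = B + sqrt_iter_lim ** sqrt_iter_lim"
proof -
  have "(sqrt_iter_lim ** sqrt_iter_lim) $ i $ j = (\<Sum>l\<in>UNIV. sqrt_iter_lim $ i $ l * sqrt_iter_lim $ l $ j)" for i j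
    by (simp add: matrix_matrix_mult_def)
  have mm: "(M ** M) $ i $ j = (\<Sum>l\<in>UNIV. M $ i $ l * M $ l $ j)" for M :: "real^'n^'n" and i j
    by (simp add: matrix_matrix_mult_def)
  have t1: "(\<lambda>k. (sqrt_iter B k ** sqrt_iter B k) $ i $ j) \<longlonglongrightarrow> (sqrt_iter_lim ** sqrt_iter_lim) $ i $ j" for i j
    unfolding mm by (intro tendsto_intros sqrt_iter_lim_entry)
  have ys: "sqrt_iter B (Suc k) $ i $ j = (1/2) * (B $ i $ j + (sqrt_iter B k ** sqrt_iter B k) $ i $ j)" for k i j
    by simp
  have "(\<lambda>k. sqrt_iter B (Suc k) $ i $ j) \<longlonglongrightarrow> sqrt_iter_lim $ i $ j" for i j
    using LIMSEQ_Suc[OF sqrt_iter_lim_entry] .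
  moreover have "(\<lambda>k. sqrt_iter B (Suc k) $ i $ j) \<longlonglongrightarrow> (1/2) * (B $ i $ j + (sqrt_iter_lim ** sqrt_iter_lim) $ i $ j)" for i j
    unfolding ys by (intro tendsto_intros t1)
  ultimately have "sqrt_iter_lim $ i $ j = (1/2) * (B $ i $ j + (sqrt_iter_lim ** sqrt_iter_lim) $ i $ j)" for i j
    using LIMSEQ_unique by blast
  then show ?thesis by (simp add: vec_eq_iff mult.commute)
qed

lemma sqrt_identity_minus_exists: "\<exists>S. sym_mat S \<and> psd_mat S \<and> S ** S = mat 1 - B"
proof (intro exI conjI)
  show "sym_mat (mat 1 - sqrt_iter_lim)" using sym_sqrt_iter_lim by (simp add: sym_mat_def transpose_diff)
  show "psd_mat (mat 1 - sqrt_iter_lim)" using sqrt_iter_lim_form_le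
    by (simp add: psd_mat_def matrix_vector_mult_diff_rdistrib inner_diff_right power2_norm_eq_inner)
  have e: "2 *\<^sub>R (sqrt_iter_lim *v v) = B *v v + sqrt_iter_lim *v (sqrt_iter_lim *v v)" for v
    using arg_cong[OF sqrt_iter_lim_fixpoint, of "\<lambda>M. M *v v"]
    by (simp add: scaleR_matrix_vector_assoc[symmetric] matrix_vector_mult_add_rdistrib matrix_vector_mul_assoc)
  show "(mat 1 - sqrt_iter_lim) ** (mat 1 - sqrt_iter_lim) = mat 1 - B"
  proof (rule matrix_eqI)
    fix v
    have "((mat 1 - sqrt_iter_lim) ** (mat 1 - sqrt_iter_lim)) *v v = v - 2 *\<^sub>R (sqrt_iter_lim *v v) + sqrt_iter_lim *v (sqrt_iter_lim *v v)"
      by (simp add: matrix_vector_mul_assoc[symmetric] matrix_vector_mult_diff_rdistrib matrix_vector_mult_diff_distrib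
          scaleR_2 algebra_simps)
    also have "\<dots> = v - B *v v" using e[of v] by (simp add: algebra_simps)
    finally show "((mat 1 - sqrt_iter_lim) ** (mat 1 - sqrt_iter_lim)) *v v = (mat 1 - B) *v v"
      by (simp add: matrix_vector_mult_diff_rdistrib)
  qed
qed

end

lemma psd_sqrt_exists:
  fixes A :: "real^'n^'n"
  assumes S: "sym_mat A" and P: "psd_mat A"
  shows "\<exists>R. sym_mat R \<and> psd_mat R \<and> R ** R = A"
proof -
  obtain K where K: "K > 0" "\<And>v. norm (A *v v) \<le> norm v * K"
    using bounded_linear.pos_bounded[OF matrix_vector_mul_bounded_linear[of A]] by blast
  define B where "B = mat 1 - (1/K) *\<^sub>R A"
  have SB: "sym_mat B" using S by (simp add: B_def sym_mat_def transpose_diff transpose_scalar)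
  have qA: "v \<bullet> (A *v v) \<le> K * (norm v)\<^sup>2" for v
  proof -
    have "v \<bullet> (A *v v) \<le> norm v * norm (A *v v)" by (rule norm_cauchy_schwarz)
    also have "\<dots> \<le> norm v * (norm v * K)" by (rule mult_left_mono[OF K(2) norm_ge_zero])
    finally show ?thesis by (simp add: power2_eq_square algebra_simps)
  qed
  have PB: "psd_mat B" unfolding psd_mat_def
  proof
    fix v
    have "(1/K) * (v \<bullet> (A *v v)) \<le> (norm v)\<^sup>2"
      using qA[of v] K(1) by (simp add: field_simps)
    then show "0 \<le> v \<bullet> (B *v v)"
      by (simp add: B_def matrix_vector_mult_diff_rdistrib scaleR_matrix_vector_assoc[symmetric] inner_diff_right power2_norm_eq_inner)
  qed
  have UB: "v \<bullet> (B *v v) \<le> (norm v)\<^sup>2" for v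
    using P K(1) by (simp add: B_def matrix_vector_mult_diff_rdistrib scaleR_matrix_vector_assoc[symmetric] inner_diff_right
        power2_norm_eq_inner psd_mat_def)
  obtain S0 where S0: "sym_mat S0" "psd_mat S0" "S0 ** S0 = mat 1 - B"
    using sqrt_identity_minus_exists[OF SB PB UB] by blast
  have "mat 1 - B = (1/K) *\<^sub>R A" by (simp add: B_def)
  show ?thesis
  proof (intro exI conjI)
    show "sym_mat (sqrt K *\<^sub>R S0)" using S0 by (simp add: sym_mat_def transpose_scalar)
    show "psd_mat (sqrt K *\<^sub>R S0)" using S0 K(1) by (simp add: psd_mat_def scaleR_matrix_vector_assoc[symmetric])
    have "(sqrt K *\<^sub>R S0) ** (sqrt K *\<^sub>R S0) = (sqrt K * sqrt K) *\<^sub>R (S0 ** S0)"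
      by (simp add: matrix_scaleR_left matrix_scaleR_right)
    also have "\<dots> = A" using S0(3) \<open>mat 1 - B = _\<close> K(1) by simp
    finally show "(sqrt K *\<^sub>R S0) ** (sqrt K *\<^sub>R S0) = A" .
  qed
qed

lemma psd_sqrt_unique:
  fixes S T :: "real^'n^'n"
  assumes SS: "sym_mat S" and PS: "psd_mat S" and ST: "sym_mat T" and PT: "psd_mat T"
    and E: "S ** S = T ** T"
  shows "S = T"
proof -
  define D where "D = S - T"
  have SD: "sym_mat D" using SS ST by (simp add: D_def sym_mat_def transpose_diff)
  have E0: "S ** D + D ** T = 0"
    using E by (simp add: D_def matrix_diff_ldistrib matrix_diff_rdistrib)
  have "trace (D ** (S ** D + D ** T)) = 0" using E0 by (simp add: trace_def)
  moreover have "trace (T ** D ** D) = trace (D ** T ** D)"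
    using trace_mul_sym[of "T ** D" D] by (simp add: matrix_mul_assoc)
  ultimately have "trace (D ** S ** D) + trace (D ** T ** D) = 0"
    by (simp add: matrix_add_ldistrib trace_add matrix_mul_assoc trace_mul_sym[of "D ** D" T])
  moreover have "trace (D ** S ** D) \<ge> 0" "trace (D ** T ** D) \<ge> 0"
    using sym_psd_sandwich[OF SD SS PS] sym_psd_sandwich[OF SD ST PT] psd_mat_trace_nonneg by blast+
  ultimately have "trace (D ** S ** D) = 0" "trace (D ** T ** D) = 0" by linarith+
  hence Z1: "D ** S ** D = 0" "D ** T ** D = 0"
    using psd_mat_trace_zero sym_psd_sandwich[OF SD SS PS] sym_psd_sandwich[OF SD ST PT] by blast+
  have "S *v (D *v v) = 0" for v
  proof -
    have "(D *v v) \<bullet> (S *v (D *v v)) = v \<bullet> ((D ** S ** D) *v v)"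
      using sym_mat_inner_swap[OF SD, of v "S *v (D *v v)"] by (simp add: matrix_vector_mul_assoc[symmetric])
    then show ?thesis using psd_mat_form_zero_imp[OF SS PS] Z1 by simp
  qed
  moreover have "T *v (D *v v) = 0" for v
  proof -
    have "(D *v v) \<bullet> (T *v (D *v v)) = v \<bullet> ((D ** T ** D) *v v)"
      using sym_mat_inner_swap[OF SD, of v "T *v (D *v v)"] by (simp add: matrix_vector_mul_assoc[symmetric])
    then show ?thesis using psd_mat_form_zero_imp[OF ST PT] Z1 by simp
  qed
  ultimately have "D *v (D *v v) = 0" for v by (simp add: D_def matrix_vector_mult_diff_rdistrib)
  hence "(D *v v) \<bullet> (D *v v) = 0" for v using sym_mat_inner_swap[OF SD, of v "D *v v"] by simp
  hence "D *v v = 0" for v by simp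
  hence "D = 0" by (intro matrix_eqI) simp
  then show ?thesis by (simp add: D_def)
qed

lemma psd_sqrt_spec:
  fixes A :: "real^'n^'n"
  assumes "sym_mat A" "psd_mat A"
  shows "sym_mat (psd_sqrt A) \<and> psd_mat (psd_sqrt A) \<and> psd_sqrt A ** psd_sqrt A = A"
proof -
  have "\<exists>!S. sym_mat S \<and> (\<forall>v. 0 \<le> v \<bullet> (S *v v)) \<and> S ** S = A"
    using psd_sqrt_exists[OF assms] psd_sqrt_unique unfolding psd_mat_def by metis
  from theI'[OF this] show ?thesis unfolding psd_sqrt_def psd_mat_def .
qed

lemma pos_def_mat_inverse:
  fixes Bm :: "real^'n^'n"
  assumes "pos_def_mat Bm"
  shows "Bm ** matrix_inv Bm = mat 1 \<and> matrix_inv Bm ** Bm = mat 1"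
  using assms by (intro matrix_inv_of_injective) (auto simp: pos_def_mat_def)

lemma matrix_inv_sym_psd:
  fixes Bm :: "real^'n^'n"
  assumes P: "pos_def_mat Bm"
  shows "sym_mat (matrix_inv Bm) \<and> psd_mat (matrix_inv Bm)"
proof
  let ?A = "matrix_inv Bm"
  have SB: "transpose Bm = Bm" using P by (simp add: pos_def_mat_def sym_mat_def)
  have I: "Bm ** ?A = mat 1" "?A ** Bm = mat 1" using pos_def_mat_inverse[OF P] by auto
  have "transpose ?A ** Bm = mat 1" using arg_cong[OF I(1), of transpose]
    by (simp add: matrix_transpose_mul SB)
  hence "transpose ?A = transpose ?A ** (Bm ** ?A)" using I by simp
  also have "\<dots> = ?A" using \<open>transpose ?A ** Bm = mat 1\<close> by (simp add: matrix_mul_assoc)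
  finally show "sym_mat ?A" by (simp add: sym_mat_def)
  show "psd_mat ?A" unfolding psd_mat_def
  proof
    fix v
    define w where "w = ?A *v v"
    have "Bm *v w = v" using I by (simp add: w_def matrix_vector_mul_assoc)
    hence "v \<bullet> (?A *v v) = w \<bullet> (Bm *v w)" by (simp add: w_def inner_commute)
    also have "\<dots> \<ge> 0" using P unfolding pos_def_mat_def
      by (cases "w = 0") (auto intro: less_imp_le)
    finally show "0 \<le> v \<bullet> (?A *v v)" .
  qed
qed

lemma loewner_inv_sqrt_sandwich:
  fixes Bm H :: "real^'n^'n"
  assumes P: "pos_def_mat Bm"
  shows "loewner_le (e *\<^sub>R mat 1) (inv_sqrt Bm ** H ** inv_sqrt Bm) \<Longrightarrow> e * (u \<bullet> (Bm *v u)) \<le> u \<bullet> (H *v u)"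
    and "loewner_le (inv_sqrt Bm ** H ** inv_sqrt Bm) (e *\<^sub>R mat 1) \<Longrightarrow> u \<bullet> (H *v u) \<le> e * (u \<bullet> (Bm *v u))"
proof -
  let ?A = "matrix_inv Bm"
  let ?S = "inv_sqrt Bm"
  have I: "Bm ** ?A = mat 1" "?A ** Bm = mat 1" using pos_def_mat_inverse[OF P] by auto
  have SB: "sym_mat Bm" using P by (simp add: pos_def_mat_def)
  have SP: "sym_mat ?S" "?S ** ?S = ?A"
    using psd_sqrt_spec[of ?A] matrix_inv_sym_psd[OF P] unfolding inv_sqrt_def by auto
  define w where "w = ?S *v (Bm *v u)"
  have "?S *v w = ((?S ** ?S) ** Bm) *v u" by (simp add: w_def matrix_vector_mul_assoc matrix_mul_assoc)
  hence Sw: "?S *v w = u" using I SP by simp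
  have ww: "w \<bullet> w = u \<bullet> (Bm *v u)"
  proof -
    have "w \<bullet> w = (Bm *v u) \<bullet> (?S *v w)" using sym_mat_inner_swap[OF SP(1), of "Bm *v u" w]
      by (simp add: w_def inner_commute)
    also have "\<dots> = u \<bullet> (Bm *v u)" using Sw by (simp add: inner_commute)
    finally show ?thesis .
  qed
  have wM: "w \<bullet> ((?S ** H ** ?S) *v w) = u \<bullet> (H *v u)"
    using sym_mat_inner_swap[OF SP(1), of w "H *v (?S *v w)"] Sw by (simp add: matrix_vector_mul_assoc[symmetric])
  have wE: "w \<bullet> ((e *\<^sub>R mat 1) *v w) = e * (u \<bullet> (Bm *v u))"
    using ww by (simp add: scaleR_matrix_vector_assoc[symmetric])
  show "loewner_le (e *\<^sub>R mat 1) (?S ** H ** ?S) \<Longrightarrow> e * (u \<bullet> (Bm *v u)) \<le> u \<bullet> (H *v u)"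
    unfolding loewner_le_def using wM wE by metis
  show "loewner_le (?S ** H ** ?S) (e *\<^sub>R mat 1) \<Longrightarrow> u \<bullet> (H *v u) \<le> e * (u \<bullet> (Bm *v u))"
    unfolding loewner_le_def using wM wE by metis
qed

section \<open>Hessians\<close>

lemma has_real_derivative_along_line:
  fixes F :: "real^'d \<Rightarrow> real"
  assumes dF: "\<And>z. (F has_derivative (\<lambda>h. G z \<bullet> h)) (at z)"
  shows "((\<lambda>r. F (a + r *\<^sub>R b)) has_real_derivative (G (a + r *\<^sub>R b) \<bullet> b)) (at r)"
proof -
  have l: "((\<lambda>r. a + r *\<^sub>R b) has_derivative (\<lambda>h. h *\<^sub>R b)) (at r)"
    by (intro derivative_eq_intros) auto
  have "((\<lambda>r. F (a + r *\<^sub>R b)) has_derivative (\<lambda>h. G (a + r *\<^sub>R b) \<bullet> (h *\<^sub>R b))) (at r)"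
    using has_derivative_compose[OF l dF] by simp
  then show ?thesis unfolding has_field_derivative_def
    by (rule has_derivative_eq_rhs) (auto simp: fun_eq_iff)
qed

lemma has_derivative_inner_matrix_vector:
  fixes g :: "real^'d \<Rightarrow> real^'d"
  assumes dg: "\<And>y. (g has_derivative (\<lambda>h. H y *v h)) (at y)"
  shows "((\<lambda>z. c \<bullet> g z) has_derivative (\<lambda>h. (c v* H z) \<bullet> h)) (at z)"
proof -
  have "((\<lambda>z. c \<bullet> g z) has_derivative (\<lambda>h. c \<bullet> (H z *v h))) (at z)"
    using bounded_linear.has_derivative[OF bounded_linear_inner_right dg] .
  then show ?thesis by (simp add: dot_lmul_matrix)
qed

lemma second_difference_mvt:
  fixes f :: "real^'d \<Rightarrow> real" and g :: "real^'d \<Rightarrow> real^'d" and H :: "real^'d \<Rightarrow> real^'d^'d"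
  assumes df: "\<And>y. (f has_derivative (\<lambda>h. g y \<bullet> h)) (at y)"
    and dg: "\<And>y. (g has_derivative (\<lambda>h. H y *v h)) (at y)"
  shows "\<exists>\<xi>. norm (\<xi> - y) \<le> \<bar>s\<bar> * (norm u + norm v) \<and>
    f (y + s *\<^sub>R u + s *\<^sub>R v) - f (y + s *\<^sub>R u) - f (y + s *\<^sub>R v) + f y = s^2 * ((H \<xi> *v u) \<bullet> v)"
proof -
  define \<psi> where "\<psi> r = f (y + s *\<^sub>R u + r *\<^sub>R (s *\<^sub>R v)) - f (y + r *\<^sub>R (s *\<^sub>R v))" for r
  define D\<psi> where "D\<psi> r = (g (y + s *\<^sub>R u + r *\<^sub>R (s *\<^sub>R v)) \<bullet> (s *\<^sub>R v) - g (y + r *\<^sub>R (s *\<^sub>R v)) \<bullet> (s *\<^sub>R v))" for r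
  have d\<psi>: "DERIV \<psi> r :> D\<psi> r" for r
    unfolding \<psi>_def D\<psi>_def by (intro DERIV_diff has_real_derivative_along_line df)
  have "\<exists>z>0. z < 1 \<and> \<psi> 1 - \<psi> 0 = (1 - 0) * D\<psi> z" by (rule MVT2) (auto intro: d\<psi>)
  then obtain r where r: "0 < r" "r < 1"
    "\<psi> 1 - \<psi> 0 = (1 - 0) * (g (y + s *\<^sub>R u + r *\<^sub>R (s *\<^sub>R v)) \<bullet> (s *\<^sub>R v) - g (y + r *\<^sub>R (s *\<^sub>R v)) \<bullet> (s *\<^sub>R v))"
    unfolding D\<psi>_def by blast
  define a where "a = y + r *\<^sub>R (s *\<^sub>R v)"
  define \<theta> where "\<theta> \<tau> = (s *\<^sub>R v) \<bullet> g (a + \<tau> *\<^sub>R (s *\<^sub>R u))" for \<tau>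
  define D\<theta> where "D\<theta> \<tau> = (((s *\<^sub>R v) v* H (a + \<tau> *\<^sub>R (s *\<^sub>R u))) \<bullet> (s *\<^sub>R u))" for \<tau>
  have d\<theta>: "DERIV \<theta> \<tau> :> D\<theta> \<tau>" for \<tau>
    unfolding \<theta>_def D\<theta>_def by (intro has_real_derivative_along_line has_derivative_inner_matrix_vector dg)
  have "\<exists>z>0. z < 1 \<and> \<theta> 1 - \<theta> 0 = (1 - 0) * D\<theta> z" by (rule MVT2) (auto intro: d\<theta>)
  then obtain \<tau> where t: "0 < \<tau>" "\<tau> < 1"
    "\<theta> 1 - \<theta> 0 = (1 - 0) * (((s *\<^sub>R v) v* H (a + \<tau> *\<^sub>R (s *\<^sub>R u))) \<bullet> (s *\<^sub>R u))"
    unfolding D\<theta>_def by blast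
  define \<xi> where "\<xi> = a + \<tau> *\<^sub>R (s *\<^sub>R u)"
  have e1: "\<psi> 1 - \<psi> 0 = f (y + s *\<^sub>R u + s *\<^sub>R v) - f (y + s *\<^sub>R u) - f (y + s *\<^sub>R v) + f y"
    by (simp add: \<psi>_def algebra_simps)
  have e2: "\<theta> 1 - \<theta> 0 = g (y + s *\<^sub>R u + r *\<^sub>R (s *\<^sub>R v)) \<bullet> (s *\<^sub>R v) - g (y + r *\<^sub>R (s *\<^sub>R v)) \<bullet> (s *\<^sub>R v)"
    by (simp add: \<theta>_def a_def algebra_simps inner_commute)
  have e3: "((s *\<^sub>R v) v* H \<xi>) \<bullet> (s *\<^sub>R u) = s^2 * ((H \<xi> *v u) \<bullet> v)"
  proof -
    have "((s *\<^sub>R v) v* H \<xi>) \<bullet> (s *\<^sub>R u) = (s *\<^sub>R v) \<bullet> (H \<xi> *v (s *\<^sub>R u))" by (rule dot_lmul_matrix)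
    also have "\<dots> = s^2 * ((H \<xi> *v u) \<bullet> v)"
      by (simp add: matrix_vector_mult_scaleR inner_commute power2_eq_square)
    finally show ?thesis .
  qed
  have "norm (\<xi> - y) = norm (r *\<^sub>R (s *\<^sub>R v) + \<tau> *\<^sub>R (s *\<^sub>R u))" by (simp add: \<xi>_def a_def)
  also have "\<dots> \<le> norm (r *\<^sub>R (s *\<^sub>R v)) + norm (\<tau> *\<^sub>R (s *\<^sub>R u))" by (rule norm_triangle_ineq)
  also have "\<dots> = r * (\<bar>s\<bar> * norm v) + \<tau> * (\<bar>s\<bar> * norm u)" using r(1) t(1) by (simp add: abs_mult)
  also have "\<dots> \<le> 1 * (\<bar>s\<bar> * norm v) + 1 * (\<bar>s\<bar> * norm u)"
    using r t by (intro add_mono mult_right_mono) auto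
  finally have "norm (\<xi> - y) \<le> \<bar>s\<bar> * (norm u + norm v)" by (simp add: algebra_simps)
  moreover have "f (y + s *\<^sub>R u + s *\<^sub>R v) - f (y + s *\<^sub>R u) - f (y + s *\<^sub>R v) + f y = s^2 * ((H \<xi> *v u) \<bullet> v)"
    using e1 e2 e3 r(3) t(3) by (simp add: \<xi>_def)
  ultimately show ?thesis by blast
qed

lemma tendsto_matrix_vector_inner:
  fixes M :: "nat \<Rightarrow> real^'d^'d"
  assumes "M \<longlonglongrightarrow> M0"
  shows "(\<lambda>k. (M k *v u) \<bullet> v) \<longlonglongrightarrow> (M0 *v u) \<bullet> v"
proof -
  have e: "(N *v u) \<bullet> v = (\<Sum>i\<in>UNIV. (\<Sum>j\<in>UNIV. N $ i $ j * u $ j) * v $ i)" for N :: "real^'d^'d"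
    by (simp add: inner_vec_def matrix_vector_mult_def)
  show ?thesis unfolding e by (intro tendsto_intros assms)
qed

lemma second_difference_quotient_tendsto:
  fixes f :: "real^'d \<Rightarrow> real" and g :: "real^'d \<Rightarrow> real^'d" and H :: "real^'d \<Rightarrow> real^'d^'d"
  assumes df: "\<And>y. (f has_derivative (\<lambda>h. g y \<bullet> h)) (at y)"
    and dg: "\<And>y. (g has_derivative (\<lambda>h. H y *v h)) (at y)"
    and cH: "isCont H y" and s: "s \<longlonglongrightarrow> 0" and s_nz: "\<And>k. s k \<noteq> 0"
  shows "(\<lambda>k. (f (y + s k *\<^sub>R u + s k *\<^sub>R v) - f (y + s k *\<^sub>R u) - f (y + s k *\<^sub>R v) + f y) / (s k)\<^sup>2)
    \<longlonglongrightarrow> (H y *v u) \<bullet> v"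
proof -
  have "\<forall>k. \<exists>\<xi>. norm (\<xi> - y) \<le> \<bar>s k\<bar> * (norm u + norm v) \<and>
    f (y + s k *\<^sub>R u + s k *\<^sub>R v) - f (y + s k *\<^sub>R u) - f (y + s k *\<^sub>R v) + f y
      = (s k)\<^sup>2 * ((H \<xi> *v u) \<bullet> v)"
    using second_difference_mvt[OF df dg] by blast
  then obtain \<xi> where \<xi>: "\<And>k. norm (\<xi> k - y) \<le> \<bar>s k\<bar> * (norm u + norm v)"
    "\<And>k. f (y + s k *\<^sub>R u + s k *\<^sub>R v) - f (y + s k *\<^sub>R u) - f (y + s k *\<^sub>R v) + f y
      = (s k)\<^sup>2 * ((H (\<xi> k) *v u) \<bullet> v)"
    by metis
  have "(\<lambda>k. \<bar>s k\<bar> * (norm u + norm v)) \<longlonglongrightarrow> 0"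
    using tendsto_mult_left_zero[OF tendsto_rabs_zero[OF s]] .
  then have "(\<lambda>k. \<xi> k - y) \<longlonglongrightarrow> 0" by (rule Lim_null_comparison[rotated]) (use \<xi>(1) in auto)
  then have "(\<lambda>k. H (\<xi> k)) \<longlonglongrightarrow> H y" by (intro isCont_tendsto_compose[OF cH]) (simp add: LIM_zero_iff)
  then have "(\<lambda>k. (H (\<xi> k) *v u) \<bullet> v) \<longlonglongrightarrow> (H y *v u) \<bullet> v" by (rule tendsto_matrix_vector_inner)
  then show ?thesis using \<xi>(2) s_nz by simp
qed

lemma hessian_sym_mat:
  fixes f :: "real^'d \<Rightarrow> real" and g :: "real^'d \<Rightarrow> real^'d" and H :: "real^'d \<Rightarrow> real^'d^'d"
  assumes df: "\<And>y. (f has_derivative (\<lambda>h. g y \<bullet> h)) (at y)"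
    and dg: "\<And>y. (g has_derivative (\<lambda>h. H y *v h)) (at y)"
    and cH: "continuous_on UNIV H"
  shows "sym_mat (H y)"
proof -
  have cy: "isCont H y" using cH continuous_on_eq_continuous_at[OF open_UNIV] by blast
  define s where "s k = inverse (real (Suc k))" for k
  have s: "s \<longlonglongrightarrow> 0" unfolding s_def by (rule LIMSEQ_inverse_real_of_nat)
  have s_nz: "s k \<noteq> 0" for k by (simp add: s_def)
  have "(H y *v u) \<bullet> v = (H y *v v) \<bullet> u" for u v
  proof -
    have "(\<lambda>k. (f (y + s k *\<^sub>R v + s k *\<^sub>R u) - f (y + s k *\<^sub>R v) - f (y + s k *\<^sub>R u) + f y) / (s k)\<^sup>2)
      = (\<lambda>k. (f (y + s k *\<^sub>R u + s k *\<^sub>R v) - f (y + s k *\<^sub>R u) - f (y + s k *\<^sub>R v) + f y) / (s k)\<^sup>2)"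
      (is "?Q v u = ?Q u v") by (simp add: add_ac diff_diff_eq)
    then have "?Q u v \<longlonglongrightarrow> (H y *v v) \<bullet> u"
      using second_difference_quotient_tendsto[OF df dg cy s s_nz, of v u] by simp
    then show ?thesis
      by (rule LIMSEQ_unique[OF second_difference_quotient_tendsto[OF df dg cy s s_nz]])
  qed
  then have "H y $ i $ j = H y $ j $ i" for i j
    using matrix_entry_inner[of "H y" i j] matrix_entry_inner[of "H y" j i] by (simp add: inner_commute)
  then show ?thesis by (simp add: sym_mat_def transpose_def vec_eq_iff)
qed

lemma hessian_form_bounds:
  fixes g :: "real^'d \<Rightarrow> real^'d" and H :: "real^'d \<Rightarrow> real^'d^'d"
  assumes dg: "\<And>y. (g has_derivative (\<lambda>h. H y *v h)) (at y)"
    and strong: "\<And>y y'. \<mu> * (norm (y - y'))\<^sup>2 \<le> (g y - g y') \<bullet> (y - y')"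
    and smooth: "\<And>y y'. (g y - g y') \<bullet> (y - y') \<le> L * (norm (y - y'))\<^sup>2"
  shows "\<mu> * (norm v)\<^sup>2 \<le> v \<bullet> (H y *v v) \<and> v \<bullet> (H y *v v) \<le> L * (norm v)\<^sup>2"
proof -
  define \<phi> where "\<phi> r = v \<bullet> g (y + r *\<^sub>R v)" for r
  have "DERIV \<phi> 0 :> ((v v* H (y + 0 *\<^sub>R v)) \<bullet> v)"
    unfolding \<phi>_def by (intro has_real_derivative_along_line has_derivative_inner_matrix_vector dg)
  hence "DERIV \<phi> 0 :> v \<bullet> (H y *v v)" by (simp add: dot_lmul_matrix)
  hence "((\<lambda>r. (\<phi> r - \<phi> 0) / (r - 0)) \<longlongrightarrow> v \<bullet> (H y *v v)) (at 0)"
    by (simp add: has_field_derivative_iff)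
  hence T: "((\<lambda>r. (\<phi> r - \<phi> 0) / r) \<longlongrightarrow> v \<bullet> (H y *v v)) (at_right 0)"
    using tendsto_mono[OF at_le[OF subset_UNIV]] by simp
  have quot: "(\<phi> r - \<phi> 0) / r = ((g (y + r *\<^sub>R v) - g y) \<bullet> ((y + r *\<^sub>R v) - y)) / r^2" if "r > 0" for r
    using that by (simp add: \<phi>_def inner_diff_left inner_diff_right inner_commute power2_eq_square field_simps)
  have n2: "(norm ((y + r *\<^sub>R v) - y))\<^sup>2 = r^2 * (norm v)\<^sup>2" for r
    by (simp add: power_mult_distrib)
  have lo: "\<mu> * (norm v)\<^sup>2 \<le> (\<phi> r - \<phi> 0) / r" if "r > 0" for r
  proof -
    have "\<mu> * (r^2 * (norm v)\<^sup>2) \<le> ((g (y + r *\<^sub>R v) - g y) \<bullet> ((y + r *\<^sub>R v) - y))"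
      using strong[of "y + r *\<^sub>R v" y] n2[of r] by simp
    hence "\<mu> * (norm v)\<^sup>2 \<le> ((g (y + r *\<^sub>R v) - g y) \<bullet> ((y + r *\<^sub>R v) - y)) / r^2"
      using that by (simp add: le_divide_eq algebra_simps)
    then show ?thesis using quot[OF that] by simp
  qed
  have hi: "(\<phi> r - \<phi> 0) / r \<le> L * (norm v)\<^sup>2" if "r > 0" for r
  proof -
    have "((g (y + r *\<^sub>R v) - g y) \<bullet> ((y + r *\<^sub>R v) - y)) \<le> L * (r^2 * (norm v)\<^sup>2)"
      using smooth[of "y + r *\<^sub>R v" y] n2[of r] by simp
    hence "((g (y + r *\<^sub>R v) - g y) \<bullet> ((y + r *\<^sub>R v) - y)) / r^2 \<le> L * (norm v)\<^sup>2"
      using that by (simp add: divide_le_eq algebra_simps)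
    then show ?thesis using quot[OF that] by simp
  qed
  have ev: "\<forall>\<^sub>F r in at_right 0. (0::real) < r" by (rule eventually_at_right_less)
  show ?thesis
  proof
    show "\<mu> * (norm v)\<^sup>2 \<le> v \<bullet> (H y *v v)"
      by (rule tendsto_lowerbound[OF T]) (auto intro: eventually_mono[OF ev] lo)
    show "v \<bullet> (H y *v v) \<le> L * (norm v)\<^sup>2"
      by (rule tendsto_upperbound[OF T]) (auto intro: eventually_mono[OF ev] hi)
  qed
qed

lemma sum_grad_zero_at_minimizer:
  fixes f :: "nat \<Rightarrow> real^'d \<Rightarrow> real" and grad :: "nat \<Rightarrow> real^'d \<Rightarrow> real^'d"
  assumes "finite I"
    and grad: "\<And>i y. i \<in> I \<Longrightarrow> (f i has_derivative (\<lambda>h. grad i y \<bullet> h)) (at y)"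
    and min: "\<And>y. (\<Sum>i\<in>I. f i xs) \<le> (\<Sum>i\<in>I. f i y)"
  shows "(\<Sum>i\<in>I. grad i xs) = 0"
proof -
  have "((\<lambda>y. \<Sum>i\<in>I. f i y) has_derivative (\<lambda>h. \<Sum>i\<in>I. grad i xs \<bullet> h)) (at xs)"
    by (intro has_derivative_sum grad)
  then have "(\<lambda>h. \<Sum>i\<in>I. grad i xs \<bullet> h) = (\<lambda>h. 0)"
    using min by (intro has_derivative_local_min) auto
  then have "(\<Sum>i\<in>I. grad i xs) \<bullet> (\<Sum>i\<in>I. grad i xs) = 0"
    by (metis (no_types) inner_sum_left)
  then show ?thesis by simp
qed

section \<open>One step of the master\<close>

lemma preconditioned_form_bound:
  fixes b q s \<epsilon>d \<epsilon>u L \<eta> :: real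
  assumes q: "\<epsilon>d * b \<le> q" "q \<le> \<epsilon>u * b" "q \<le> L * s"
    and \<epsilon>: "0 < \<epsilon>d" "\<epsilon>d < \<epsilon>u" and \<eta>: "0 < \<eta>" "\<eta> * (\<epsilon>d + \<epsilon>u) \<le> 2" "\<eta> * \<epsilon>d \<le> 1"
  shows "\<bar>b - \<eta> * q\<bar> \<le> (1 - \<eta> * \<epsilon>d) * (L / \<epsilon>d) * s"
proof -
  have "0 \<le> (\<epsilon>u - \<epsilon>d) * b" using q by (simp add: algebra_simps)
  then have b: "0 \<le> b" using \<epsilon> by (simp add: zero_le_mult_iff)
  have bL: "b \<le> L * s / \<epsilon>d" using q \<epsilon> by (simp add: le_divide_eq mult.commute)
  have upper: "b - \<eta> * q \<le> (1 - \<eta> * \<epsilon>d) * b"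
    using mult_left_mono[OF q(1) less_imp_le[OF \<eta>(1)]] by (simp add: algebra_simps)
  have "(1 - \<eta> * \<epsilon>u) * b \<le> b - \<eta> * q"
    using mult_left_mono[OF q(2) less_imp_le[OF \<eta>(1)]] by (simp add: algebra_simps)
  moreover have "- ((1 - \<eta> * \<epsilon>d) * b) \<le> (1 - \<eta> * \<epsilon>u) * b"
    using mult_right_mono[OF \<eta>(2) b] by (simp add: algebra_simps)
  moreover have "(1 - \<eta> * \<epsilon>d) * b \<le> (1 - \<eta> * \<epsilon>d) * (L * s / \<epsilon>d)"
    using bL \<eta>(3) by (intro mult_left_mono) auto
  moreover have "(1 - \<eta> * \<epsilon>d) * (L / \<epsilon>d) * s = (1 - \<eta> * \<epsilon>d) * (L * s / \<epsilon>d)" by simp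
  ultimately show ?thesis using upper unfolding abs_le_iff by linarith
qed

lemma preconditioned_step_lipschitz:
  fixes g :: "real^'d \<Rightarrow> real^'d" and H :: "real^'d \<Rightarrow> real^'d^'d" and Bm :: "real^'d^'d"
  assumes dg: "\<And>y. (g has_derivative (\<lambda>h. H y *v h)) (at y)"
    and H_sym: "\<And>y. sym_mat (H y)" and B_sym: "sym_mat Bm"
    and lower: "\<And>y u. \<epsilon>d * (u \<bullet> (Bm *v u)) \<le> u \<bullet> (H y *v u)"
    and upper: "\<And>y u. u \<bullet> (H y *v u) \<le> \<epsilon>u * (u \<bullet> (Bm *v u))"
    and smooth: "\<And>y u. u \<bullet> (H y *v u) \<le> L * (norm u)\<^sup>2"
    and \<epsilon>: "0 < \<epsilon>d" "\<epsilon>d < \<epsilon>u" and \<eta>: "0 < \<eta>" "\<eta> * (\<epsilon>d + \<epsilon>u) \<le> 2" "\<eta> * \<epsilon>d \<le> 1"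
  shows "norm (Bm *v (z - xs) - \<eta> *\<^sub>R (g z - g xs)) \<le> (1 - \<eta> * \<epsilon>d) * (L / \<epsilon>d) * norm (z - xs)"
proof -
  define K where "K = (1 - \<eta> * \<epsilon>d) * (L / \<epsilon>d)"
  define J where "J y = Bm - \<eta> *\<^sub>R H y" for y
  have "sym_mat (J y)" for y
    using B_sym H_sym[of y] by (simp add: J_def sym_mat_def transpose_diff transpose_scalar)
  moreover have "\<bar>h \<bullet> (J y *v h)\<bar> \<le> K * (norm h)\<^sup>2" for y h
    using preconditioned_form_bound[OF lower upper smooth \<epsilon> \<eta>]
    by (simp add: K_def J_def matrix_vector_mult_diff_rdistrib scaleR_matrix_vector_assoc[symmetric]
        inner_diff_right)
  ultimately have J_norm: "norm (J y *v h) \<le> K * norm h" for y h by (rule norm_sym_mat_vector_le)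
  define F where "F y = Bm *v y - \<eta> *\<^sub>R g y" for y
  have "(F has_derivative (\<lambda>h. J y *v h)) (at y within UNIV)" for y
    unfolding F_def J_def matrix_vector_mult_diff_rdistrib scaleR_matrix_vector_assoc[symmetric]
    by (intro has_derivative_diff has_derivative_scaleR_right dg bounded_linear_imp_has_derivative
        matrix_vector_mul_bounded_linear)
  moreover have "onorm (\<lambda>h. J y *v h) \<le> K" for y by (rule onorm_le) (rule J_norm)
  ultimately have "norm (F z - F xs) \<le> K * norm (z - xs)"
    by (intro differentiable_bound[OF convex_UNIV]) auto
  moreover have "F z - F xs = Bm *v (z - xs) - \<eta> *\<^sub>R (g z - g xs)"
    by (simp add: F_def matrix_vector_mult_diff_distrib scaleR_diff_right algebra_simps)
  ultimately show ?thesis by (simp add: K_def)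
qed

lemma worker_estimates:
  fixes f :: "real^'d \<Rightarrow> real" and g :: "real^'d \<Rightarrow> real^'d" and H :: "real^'d \<Rightarrow> real^'d^'d"
    and Bm :: "real^'d^'d"
  assumes df: "\<And>y. (f has_derivative (\<lambda>h. g y \<bullet> h)) (at y)"
    and dg: "\<And>y. (g has_derivative (\<lambda>h. H y *v h)) (at y)" and cH: "continuous_on UNIV H"
    and strong: "\<And>y y'. \<mu> * (norm (y - y'))\<^sup>2 \<le> (g y - g y') \<bullet> (y - y')"
    and smooth: "\<And>y y'. (g y - g y') \<bullet> (y - y') \<le> L * (norm (y - y'))\<^sup>2"
    and B_pd: "pos_def_mat Bm"
    and spec_lo: "\<And>y. loewner_le (\<epsilon>d *\<^sub>R mat 1) (inv_sqrt Bm ** H y ** inv_sqrt Bm)"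
    and spec_hi: "\<And>y. loewner_le (inv_sqrt Bm ** H y ** inv_sqrt Bm) (\<epsilon>u *\<^sub>R mat 1)"
    and \<epsilon>: "0 < \<epsilon>d" "\<epsilon>d < \<epsilon>u" and \<eta>: "0 < \<eta>" "\<eta> * (\<epsilon>d + \<epsilon>u) \<le> 2" "\<eta> * \<epsilon>d \<le> 1"
  shows "norm (Bm *v (z - xs) - \<eta> *\<^sub>R (g z - g xs)) \<le> (1 - \<eta> * \<epsilon>d) * (L / \<epsilon>d) * norm (z - xs)"
    and "\<mu> / \<epsilon>u * (norm p)\<^sup>2 \<le> p \<bullet> (Bm *v p)"
proof -
  have H_form: "\<mu> * (norm u)\<^sup>2 \<le> u \<bullet> (H y *v u) \<and> u \<bullet> (H y *v u) \<le> L * (norm u)\<^sup>2" for y u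
    by (rule hessian_form_bounds[OF dg strong smooth])
  have B_lower: "\<epsilon>d * (u \<bullet> (Bm *v u)) \<le> u \<bullet> (H y *v u)"
    and B_upper: "u \<bullet> (H y *v u) \<le> \<epsilon>u * (u \<bullet> (Bm *v u))" for y u
    using loewner_inv_sqrt_sandwich[OF B_pd] spec_lo spec_hi by blast+
  show "norm (Bm *v (z - xs) - \<eta> *\<^sub>R (g z - g xs)) \<le> (1 - \<eta> * \<epsilon>d) * (L / \<epsilon>d) * norm (z - xs)"
    using B_pd H_form
    by (intro preconditioned_step_lipschitz[OF dg hessian_sym_mat[OF df dg cH] _ B_lower B_upper _ \<epsilon> \<eta>])
      (auto simp: pos_def_mat_def)
  have "\<mu> * (norm p)\<^sup>2 \<le> \<epsilon>u * (p \<bullet> (Bm *v p))"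
    using H_form[where u = p and y = 0] B_upper[where u = p and y = 0] by linarith
  then show "\<mu> / \<epsilon>u * (norm p)\<^sup>2 \<le> p \<bullet> (Bm *v p)"
    using \<epsilon> by (simp add: divide_le_eq mult.commute)
qed

lemma master_step_contraction:
  fixes Bs :: "nat \<Rightarrow> real^'d^'d" and g :: "nat \<Rightarrow> real^'d \<Rightarrow> real^'d" and z :: "nat \<Rightarrow> real^'d"
  assumes I: "finite I" "I \<noteq> {}"
    and grad_zero: "(\<Sum>i\<in>I. g i xs) = 0"
    and c: "0 < c" and coercive: "\<And>i p. i \<in> I \<Longrightarrow> c * (norm p)\<^sup>2 \<le> p \<bullet> (Bs i *v p)"
    and worker: "\<And>i. i \<in> I \<Longrightarrow>
      norm (Bs i *v (z i - xs) - \<eta> *\<^sub>R (g i (z i) - g i xs)) \<le> K * norm (z i - xs)"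
    and K: "0 \<le> K" and R: "\<And>i. i \<in> I \<Longrightarrow> norm (z i - xs) \<le> R"
  shows "norm (matrix_inv (\<Sum>i\<in>I. Bs i) *v ((\<Sum>i\<in>I. Bs i *v z i) - \<eta> *\<^sub>R (\<Sum>i\<in>I. g i (z i))) - xs)
    \<le> K / c * R"
proof -
  let ?A = "\<Sum>i\<in>I. Bs i"
  define w where "w i = Bs i *v (z i - xs) - \<eta> *\<^sub>R (g i (z i) - g i xs)" for i
  have card: "0 < real (card I)" using I by (simp add: card_gt_0_iff)
  then have cI: "0 < real (card I) * c" using c by simp
  have coerciveA: "real (card I) * c * (norm p)\<^sup>2 \<le> p \<bullet> (?A *v p)" for p
  proof -
    have "real (card I) * c * (norm p)\<^sup>2 = (\<Sum>i\<in>I. c * (norm p)\<^sup>2)" by simp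
    also have "\<dots> \<le> (\<Sum>i\<in>I. p \<bullet> (Bs i *v p))" by (intro sum_mono coercive)
    finally show ?thesis by (simp add: sum_matrix_vector_mult inner_sum_right)
  qed
  then have "\<forall>v. ?A *v v = 0 \<longrightarrow> v = 0"
    using coercive_matrix_vector_eq_0[OF cI] by blast
  then have inv: "matrix_inv ?A ** ?A = mat 1" using matrix_inv_of_injective by blast
  have "(\<Sum>i\<in>I. w i) = (\<Sum>i\<in>I. Bs i *v z i) - \<eta> *\<^sub>R (\<Sum>i\<in>I. g i (z i)) - ?A *v xs"
    using grad_zero
    by (simp add: w_def matrix_vector_mult_diff_distrib scaleR_diff_right sum_subtractf
        scaleR_sum_right[symmetric] sum_matrix_vector_mult)
  then have err: "matrix_inv ?A *v ((\<Sum>i\<in>I. Bs i *v z i) - \<eta> *\<^sub>R (\<Sum>i\<in>I. g i (z i))) - xs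
      = matrix_inv ?A *v (\<Sum>i\<in>I. w i)"
    using inv by (simp add: matrix_vector_mult_diff_distrib matrix_vector_mul_assoc)
  have "norm (\<Sum>i\<in>I. w i) \<le> (\<Sum>i\<in>I. norm (w i))" by (rule norm_sum)
  also have "\<dots> \<le> (\<Sum>i\<in>I. K * R)"
    using worker R K unfolding w_def by (intro sum_mono) (meson mult_left_mono order_trans)
  finally have sum_w: "norm (\<Sum>i\<in>I. w i) \<le> real (card I) * (K * R)" by simp
  have "norm (matrix_inv ?A *v (\<Sum>i\<in>I. w i)) \<le> norm (\<Sum>i\<in>I. w i) / (real (card I) * c)"
    by (rule norm_matrix_inv_le[OF cI coerciveA])
  also have "\<dots> \<le> real (card I) * (K * R) / (real (card I) * c)"
    using sum_w cI by (intro divide_right_mono) auto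
  also have "\<dots> = K / c * R" using card by simp
  finally show ?thesis unfolding err .
qed

lemma stepsize_window:
  fixes \<mu> L \<epsilon>d \<epsilon>u \<eta> :: real
  assumes \<mu>: "0 < \<mu>" "\<mu> < L" and \<epsilon>: "0 < \<epsilon>d" "\<epsilon>d < \<epsilon>u"
    and lo: "(1 / \<epsilon>d) * (1 - 1 / ((\<epsilon>u / \<epsilon>d) * (L / \<mu>))) < \<eta>"
    and hi: "\<eta> < 2 / (\<epsilon>d + \<epsilon>u)"
  shows "0 < \<eta>" "\<eta> * (\<epsilon>d + \<epsilon>u) \<le> 2" "\<eta> * \<epsilon>d \<le> 1"
    and "(1 - \<eta> * \<epsilon>d) * (L / \<epsilon>d) / (\<mu> / \<epsilon>u) < 1"
proof -
  have lo': "1 - (\<epsilon>d * \<mu>) / (\<epsilon>u * L) < \<eta> * \<epsilon>d"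
    using lo \<mu> \<epsilon> by (simp add: field_simps)
  have "\<epsilon>d * \<mu> < \<epsilon>u * L" using \<mu> \<epsilon> by (intro mult_strict_mono) auto
  then have "(\<epsilon>d * \<mu>) / (\<epsilon>u * L) < 1" using \<mu> \<epsilon> by simp
  then show "0 < \<eta>" using lo' \<epsilon> by (smt (verit) zero_less_mult_iff)
  then show "\<eta> * (\<epsilon>d + \<epsilon>u) \<le> 2" and "\<eta> * \<epsilon>d \<le> 1"
    using hi \<epsilon> by (simp_all add: less_divide_eq) (smt (verit) mult_strict_left_mono distrib_left)
  have "(1 - \<eta> * \<epsilon>d) * ((L / \<epsilon>d) * (\<epsilon>u / \<mu>)) < ((\<epsilon>d * \<mu>) / (\<epsilon>u * L)) * ((L / \<epsilon>d) * (\<epsilon>u / \<mu>))"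
    using lo' \<mu> \<epsilon> by (intro mult_strict_right_mono) auto
  also have "\<dots> = 1" using \<mu> \<epsilon> by (simp add: field_simps)
  finally show "(1 - \<eta> * \<epsilon>d) * (L / \<epsilon>d) / (\<mu> / \<epsilon>u) < 1" by simp
qed

section \<open>Epochs\<close>

lemma card_ge_two_obtain_less:
  fixes A :: "nat set"
  assumes "finite A" "2 \<le> card A"
  shows "\<exists>a\<in>A. \<exists>b\<in>A. a < b"
proof (rule ccontr)
  assume "\<not> ?thesis"
  hence "\<forall>a\<in>A. \<forall>b\<in>A. a = b" by (metis linorder_neqE_nat)
  hence "card A \<le> Suc 0" using card_le_Suc0_iff_eq[OF assms(1)] by blast
  thus False using assms(2) by simp
qed

lemma card_exchanges_ge_two:
  fixes a b t :: nat
  assumes "a < b" "b \<le> t" "sched a = i" "sched b = (i::nat)"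
  shows "2 \<le> card {s. s \<le> t \<and> sched s = i}"
proof -
  have "a \<le> t" using assms(1,2) by simp
  hence "{a, b} \<subseteq> {s. s \<le> t \<and> sched s = i}" using assms by auto
  moreover have "finite {s. s \<le> t \<and> sched s = i}" by (rule finite_subset[of _ "{..t}"]) auto
  ultimately have "card {a, b} \<le> card {s. s \<le> t \<and> sched s = i}" by (rule card_mono[rotated])
  thus ?thesis using assms(1) by simp
qed

lemma local_copy_eq_iterate:
  fixes x :: "nat \<Rightarrow> real^'d"
  assumes C: "2 \<le> card {s. s \<le> t \<and> sched s = i}"
  shows "\<exists>l2<t. local_copy x sched i t = x (Suc l2) \<and>
     (\<forall>a b. a < b \<and> b \<le> t \<and> sched a = i \<and> sched b = i \<longrightarrow> a \<le> l2)"
proof -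
  let ?S = "{s. s \<le> t \<and> sched s = i}"
  have fin: "finite ?S" by (rule finite_subset[of _ "{..t}"]) auto
  obtain a b where ab: "a \<in> ?S" "b \<in> ?S" "a < b" using card_ge_two_obtain_less[OF fin C] by blast
  define l1 where "l1 = Max ?S"
  have ne: "?S \<noteq> {}" using ab by blast
  have l1S: "l1 \<in> ?S" using Max_in[OF fin ne] l1_def by simp
  have bl1: "b \<le> l1" using Max_ge[OF fin ab(2)] l1_def by simp
  have al1: "a < l1" using ab bl1 by simp
  let ?S' = "{s. s \<le> l1 - 1 \<and> sched s = i}"
  have fin': "finite ?S'" by (rule finite_subset[of _ "{..l1 - 1}"]) auto
  have aS': "a \<in> ?S'" using ab al1 by auto
  define l2 where "l2 = Max ?S'"
  have l2S: "l2 \<in> ?S'" using Max_in[OF fin'] aS' l2_def by blast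
  have l2le: "l2 \<le> l1 - 1" using l2S by simp
  have d1: "delay sched i t = t - l1" by (simp add: delay_def l1_def)
  have l1t: "l1 \<le> t" using l1S by simp
  have t1: "t - delay sched i t - 1 = l1 - 1" using d1 l1t by simp
  have d2: "delay sched i (l1 - 1) = l1 - 1 - l2" by (simp add: delay_def l2_def)
  have "double_delay sched i t = delay sched i t + delay sched i (l1 - 1) + 1"
    by (simp only: double_delay_def t1)
  also have "\<dots> = (t - l1) + (l1 - 1 - l2) + 1" by (simp only: d1 d2)
  also have "\<dots> = t - l2" using l2le al1 l1t by simp
  finally have dd: "double_delay sched i t = t - l2" .
  have lc: "local_copy x sched i t = x (Suc l2)"
    unfolding local_copy_def using C dd l2le al1 l1t by simp
  have mx: "a' \<le> l2" if "a' < b'" "b' \<le> t" "sched a' = i" "sched b' = i" for a' b'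
  proof -
    have "b' \<le> l1" using Max_ge[OF fin, of b'] that l1_def by simp
    hence "a' \<in> ?S'" using that by auto
    thus ?thesis using Max_ge[OF fin'] l2_def by simp
  qed
  have "l2 < t" using l2le al1 l1t by simp
  thus ?thesis using lc mx by blast
qed

lemma epoch_two_exchanges:
  fixes sched :: "nat \<Rightarrow> nat"
  assumes sched_inf: "\<And>i t. i \<in> {1..n} \<Longrightarrow> \<exists>s\<ge>t. sched s = i"
    and Et: "epoch sched n (Suc (Suc m)) \<le> t" and i: "i \<in> {1..n}"
  shows "\<exists>a b. epoch sched n (Suc m) \<le> a \<and> a < b \<and> b \<le> t \<and> sched a = i \<and> sched b = i"
proof -
  define E where "E = epoch sched n (Suc m)"
  define P where "P t' = (\<forall>i\<in>{1..n}. 2 \<le> card {s. E \<le> s \<and> s \<le> t' \<and> sched s = i})" for t'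
  have fin: "finite {s. E \<le> s \<and> s \<le> t' \<and> sched s = j}" for t' j
    by (rule finite_subset[of _ "{..t'}"]) auto
  have "\<forall>j\<in>{1..n}. \<exists>b. \<exists>a. E \<le> a \<and> a < b \<and> sched a = j \<and> sched b = j"
  proof
    fix j assume j: "j \<in> {1..n}"
    obtain a where a: "a \<ge> E" "sched a = j" using sched_inf[OF j] by blast
    obtain b where b: "b \<ge> Suc a" "sched b = j" using sched_inf[OF j] by blast
    show "\<exists>b. \<exists>a. E \<le> a \<and> a < b \<and> sched a = j \<and> sched b = j" using a b by (intro exI[of _ b] exI[of _ a]) auto
  qed
  then obtain bf where bf: "\<forall>j\<in>{1..n}. \<exists>a. E \<le> a \<and> a < bf j \<and> sched a = j \<and> sched (bf j) = j"
    by metis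
  \<comment> \<open>By time \<open>T\<close> every worker has exchanged twice since \<open>E\<close>, so the \<open>LEAST\<close> defining the
    next epoch is attained.\<close>
  define T where "T = (\<Sum>j\<in>{1..n}. bf j)"
  have "P T" unfolding P_def
  proof
    fix j assume j: "j \<in> {1..n}"
    obtain a where a: "E \<le> a" "a < bf j" "sched a = j" "sched (bf j) = j" using bf j by blast
    have bT: "bf j \<le> T" unfolding T_def using j by (intro member_le_sum) auto
    have "{a, bf j} \<subseteq> {s. E \<le> s \<and> s \<le> T \<and> sched s = j}" using a bT by auto
    hence "card {a, bf j} \<le> card {s. E \<le> s \<and> s \<le> T \<and> sched s = j}" by (rule card_mono[OF fin])
    thus "2 \<le> card {s. E \<le> s \<and> s \<le> T \<and> sched s = j}" using a by simp
  qed
  hence PE: "P (epoch sched n (Suc (Suc m)))"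
    unfolding epoch.simps(3) E_def[symmetric] P_def[symmetric] by (rule LeastI)
  hence "2 \<le> card {s. E \<le> s \<and> s \<le> epoch sched n (Suc (Suc m)) \<and> sched s = i}"
    using i P_def by blast
  then obtain a b where "a \<in> {s. E \<le> s \<and> s \<le> epoch sched n (Suc (Suc m)) \<and> sched s = i}"
    "b \<in> {s. E \<le> s \<and> s \<le> epoch sched n (Suc (Suc m)) \<and> sched s = i}" "a < b"
    using card_ge_two_obtain_less[OF fin] by blast
  thus ?thesis using Et E_def by (intro exI[of _ a] exI[of _ b]) auto
qed

lemma local_copy_cases:
  fixes x :: "nat \<Rightarrow> real^'d"
  obtains "local_copy x sched i t = x 0"
  | l where "l < t" "local_copy x sched i t = x (Suc l)"
  using local_copy_eq_iterate[of t sched i x]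
  by (cases "2 \<le> card {s. s \<le> t \<and> sched s = i}") (auto simp: local_copy_def)

lemma local_copy_within_epoch:
  fixes x :: "nat \<Rightarrow> real^'d"
  assumes sched_inf: "\<And>i t. i \<in> {1..n} \<Longrightarrow> \<exists>s\<ge>t. sched s = i"
    and t: "epoch sched n (Suc (Suc m)) \<le> t" and i: "i \<in> {1..n}"
  obtains l where "epoch sched n (Suc m) \<le> l" "l < t" "local_copy x sched i t = x (Suc l)"
proof -
  obtain a b where ab: "epoch sched n (Suc m) \<le> a" "a < b" "b \<le> t" "sched a = i" "sched b = i"
    using epoch_two_exchanges[OF sched_inf t i] by blast
  obtain l where l: "l < t" "local_copy x sched i t = x (Suc l)"
      "\<forall>a b. a < b \<and> b \<le> t \<and> sched a = i \<and> sched b = i \<longrightarrow> a \<le> l"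
    using local_copy_eq_iterate[OF card_exchanges_ge_two[OF ab(2-5)], of x] by blast
  have "a \<le> l" using ab(2-5) l(3) by blast
  then have "epoch sched n (Suc m) \<le> l" using ab(1) by linarith
  with l show thesis using that by blast
qed

lemma epoch_linear_convergence:
  fixes x :: "nat \<Rightarrow> real^'d"
  assumes sched_inf: "\<And>i t. i \<in> {1..n} \<Longrightarrow> \<exists>s\<ge>t. sched s = i"
    and \<rho>: "\<rho> \<le> 1"
    and step: "\<And>t R. (\<And>i. i \<in> {1..n} \<Longrightarrow> norm (local_copy x sched i t - xs) \<le> R)
      \<Longrightarrow> norm (x (Suc t) - xs) \<le> \<rho> * R"
  shows "epoch sched n k \<le> t \<Longrightarrow> norm (x (Suc t) - xs) \<le> \<rho> ^ k * norm (x 0 - xs)"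
proof (induction t arbitrary: k rule: less_induct)
  case (less t)
  let ?c = "norm (x 0 - xs)"
  have copies: "norm (local_copy x sched i t - xs) \<le> ?c" for i
  proof (cases rule: local_copy_cases[of x sched i t])
    case (2 l)
    then show ?thesis using less.IH[of l 0] by simp
  qed simp
  have "k \<le> 1 \<or> k = Suc (Suc (k - 2))" by arith
  then consider "k \<le> 1" | m where "k = Suc (Suc m)" by blast
  then show ?case
  proof cases
    case 1
    have "norm (x (Suc t) - xs) \<le> \<rho> * ?c" by (rule step) (rule copies)
    also have "\<dots> \<le> \<rho> ^ k * ?c"
      using 1 mult_right_mono[OF \<rho> norm_ge_zero] by (cases k) auto
    finally show ?thesis .
  next
    case (2 m)
    have "norm (local_copy x sched i t - xs) \<le> \<rho> ^ Suc m * ?c" if i: "i \<in> {1..n}" for i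
    proof -
      obtain l where l: "epoch sched n (Suc m) \<le> l" "l < t" "local_copy x sched i t = x (Suc l)"
        using local_copy_within_epoch[OF sched_inf _ i] less.prems 2 by blast
      then show ?thesis using less.IH[of l "Suc m"] by simp
    qed
    then have "norm (x (Suc t) - xs) \<le> \<rho> * (\<rho> ^ Suc m * ?c)" by (rule step)
    then show ?thesis using 2 by simp
  qed
qed

theorem theorem1:
  fixes n :: nat
    and f :: "nat \<Rightarrow> real^'d \<Rightarrow> real"
    and grad :: "nat \<Rightarrow> real^'d \<Rightarrow> real^'d"
    and hess :: "nat \<Rightarrow> real^'d \<Rightarrow> real^'d^'d"
    and \<mu> L \<epsilon>d \<epsilon>u \<eta> :: real
    and xs :: "real^'d"
    and sched :: "nat \<Rightarrow> nat"
    and B :: "nat \<Rightarrow> nat \<Rightarrow> real^'d^'d"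
    and x :: "nat \<Rightarrow> real^'d"
  assumes n_pos: "1 \<le> n"
    and grad: "\<And>i y. i \<in> {1..n} \<Longrightarrow> (f i has_derivative (\<lambda>h. grad i y \<bullet> h)) (at y)"
    and hess: "\<And>i y. i \<in> {1..n} \<Longrightarrow> (grad i has_derivative (\<lambda>h. hess i y *v h)) (at y)"
    and hess_cont: "\<And>i. i \<in> {1..n} \<Longrightarrow> continuous_on UNIV (hess i)"
    and mu_pos: "0 < \<mu>" and mu_L: "\<mu> < L"
    and strong: "\<And>i y y'. i \<in> {1..n} \<Longrightarrow>
        \<mu> * (norm (y - y'))\<^sup>2 \<le> (grad i y - grad i y') \<bullet> (y - y')"
    and smooth: "\<And>i y y'. i \<in> {1..n} \<Longrightarrow>
        (grad i y - grad i y') \<bullet> (y - y') \<le> L * (norm (y - y'))\<^sup>2"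
    and xs_min: "\<And>y. (1 / real n) * (\<Sum>i\<in>{1..n}. f i xs) \<le> (1 / real n) * (\<Sum>i\<in>{1..n}. f i y)"
    and sched_range: "\<And>t. sched t \<in> {1..n}"
    and sched_inf: "\<And>i t. i \<in> {1..n} \<Longrightarrow> \<exists>s\<ge>t. sched s = i"
    and B_pd: "\<And>i t. i \<in> {1..n} \<Longrightarrow> pos_def_mat (B i t)"
    and B_hold: "\<And>i t. i \<in> {1..n} \<Longrightarrow> (\<exists>s\<le>t. sched s = i) \<Longrightarrow>
        B i t = B i (t - delay sched i t)"
    and B_init: "\<And>i t. i \<in> {1..n} \<Longrightarrow> \<not> (\<exists>s\<le>t. sched s = i) \<Longrightarrow> B i t = B i 0"
    and eps_pos: "0 < \<epsilon>d" and eps_lt: "\<epsilon>d < \<epsilon>u"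
    and spec_lo: "\<And>i t y. i \<in> {1..n} \<Longrightarrow>
        loewner_le (\<epsilon>d *\<^sub>R mat 1) (inv_sqrt (B i t) ** hess i y ** inv_sqrt (B i t))"
    and spec_hi: "\<And>i t y. i \<in> {1..n} \<Longrightarrow>
        loewner_le (inv_sqrt (B i t) ** hess i y ** inv_sqrt (B i t)) (\<epsilon>u *\<^sub>R mat 1)"
    and eps_ratio: "\<epsilon>u / \<epsilon>d < (1 / 2) * (1 + 1 / (L / \<mu>)
        + sqrt ((1 + 1 / (L / \<mu>))\<^sup>2 + 4 / (L / \<mu>)))"
    and eta_lo: "(1 / \<epsilon>d) * (1 - 1 / ((\<epsilon>u / \<epsilon>d) * (L / \<mu>))) < \<eta>"
    and eta_hi: "\<eta> < 2 / (\<epsilon>d + \<epsilon>u)"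
    and master: "\<And>t. x (Suc t) =
        matrix_inv (\<Sum>i\<in>{1..n}. B i t) *v
          ((\<Sum>i\<in>{1..n}. B i t *v local_copy x sched i t)
           - \<eta> *\<^sub>R (\<Sum>i\<in>{1..n}. grad i (local_copy x sched i t)))"
  shows "\<exists>\<rho> < 1. \<forall>m \<ge> 1. \<forall>t. epoch sched n m \<le> t \<and> t < epoch sched n (Suc m) \<longrightarrow>
           norm (x (Suc t) - xs) \<le> \<rho> ^ m * norm (x 0 - xs)"
proof -
  \<comment> \<open>\<open>eps_ratio\<close> only guarantees that the stepsize window is nonempty.\<close>
  define K where "K = (1 - \<eta> * \<epsilon>d) * (L / \<epsilon>d)"
  define \<rho> where "\<rho> = K / (\<mu> / \<epsilon>u)"
  have \<eta>: "0 < \<eta>" "\<eta> * (\<epsilon>d + \<epsilon>u) \<le> 2" "\<eta> * \<epsilon>d \<le> 1" and \<rho>: "\<rho> < 1"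
    using stepsize_window[OF mu_pos mu_L eps_pos eps_lt eta_lo eta_hi] by (simp_all add: \<rho>_def K_def)
  have worker: "norm (B i t *v (z - xs) - \<eta> *\<^sub>R (grad i z - grad i xs)) \<le> K * norm (z - xs)"
    and coercive: "\<mu> / \<epsilon>u * (norm p)\<^sup>2 \<le> p \<bullet> (B i t *v p)" if i: "i \<in> {1..n}" for i t z p
    using worker_estimates[OF grad[OF i] hess[OF i] hess_cont[OF i] strong[OF i] smooth[OF i] B_pd[OF i]
        spec_lo[OF i] spec_hi[OF i] eps_pos eps_lt \<eta>]
    by (simp_all add: K_def)
  have "0 < 1 / real n" using n_pos by simp
  then have "(\<Sum>i\<in>{1..n}. f i xs) \<le> (\<Sum>i\<in>{1..n}. f i y)" for y
    using xs_min[of y] by (simp only: mult_le_cancel_left_pos)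
  then have grad_zero: "(\<Sum>i\<in>{1..n}. grad i xs) = 0"
    by (intro sum_grad_zero_at_minimizer[OF _ grad]) simp_all
  have K_nonneg: "0 \<le> K" using \<eta> mu_pos mu_L eps_pos by (simp add: K_def)
  have step: "norm (x (Suc t) - xs) \<le> \<rho> * R"
    if "\<And>i. i \<in> {1..n} \<Longrightarrow> norm (local_copy x sched i t - xs) \<le> R" for t R
    unfolding master \<rho>_def
    by (rule master_step_contraction[where Bs = "\<lambda>i. B i t" and z = "\<lambda>i. local_copy x sched i t",
          OF _ _ grad_zero _ coercive worker K_nonneg that])
      (use n_pos mu_pos eps_pos eps_lt in auto)
  have "epoch sched n m \<le> t \<Longrightarrow> norm (x (Suc t) - xs) \<le> \<rho> ^ m * norm (x 0 - xs)" for m t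
    by (rule epoch_linear_convergence[where x = x and xs = xs, OF sched_inf less_imp_le[OF \<rho>] step])
  then show ?thesis using \<rho> by blast
qed
end
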